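(* Let $(V,\|\cdot\|)$ be a normed plane and let $x,y\in V$ be distinct. Then $\mathrm{bis}(x,y)$ contains at most one line. If moreover $[xy]$ is parallel to some nondegenerate segment of the unit circle $S$ and $\mathrm{bis}(x,y)$ contains a line, then this line is the line through the centers of the two circles which contain $[xy]$ as a maximal segment.
   Context: A normed (Minkowski) plane $(V,\|\cdot\|)$ is a two-dimensional real vector space with a norm; $S=\{v:\|v\|=1\}$ is its unit circle. For distinct $x,y$, $\mathrm{bis}(x,y)=\{z\in V:\|z-x\|=\|z-y\|\}$. A circle with center $c$ and radius $\lambda>0$ is $c+\lambda S$. A maximal segment of a circle is a nondegenerate segment contained in the circle that is not properly contained in any other segment contained in that circle. Fact used in the statement: if $[xy]$ is parallel to a nondegenerate segment of $S$, then there are exactly two circles containing $[xy]$ as a maximal segment. *)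

theory Defs
  imports "HOL-Analysis.Analysis"
begin

definition is_norm :: "(real^2 \<Rightarrow> real) \<Rightarrow> bool" where
  "is_norm N \<longleftrightarrow>
     (\<forall>v. 0 \<le> N v) \<and> (\<forall>v. N v = 0 \<longleftrightarrow> v = 0) \<and>
     (\<forall>c v. N (c *\<^sub>R v) = \<bar>c\<bar> * N v) \<and>
     (\<forall>v w. N (v + w) \<le> N v + N w)"

definition unit_circle :: "(real^2 \<Rightarrow> real) \<Rightarrow> (real^2) set" where
  "unit_circle N = {v. N v = 1}"

definition bis :: "(real^2 \<Rightarrow> real) \<Rightarrow> real^2 \<Rightarrow> real^2 \<Rightarrow> (real^2) set" where
  "bis N x y = {z. N (z - x) = N (z - y)}"

definition ncircle :: "(real^2 \<Rightarrow> real) \<Rightarrow> real^2 \<Rightarrow> real \<Rightarrow> (real^2) set" where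
  "ncircle N c lam = {c + lam *\<^sub>R v | v. v \<in> unit_circle N}"

definition is_line :: "(real^2) set \<Rightarrow> bool" where
  "is_line L \<longleftrightarrow> (\<exists>p d. d \<noteq> 0 \<and> L = {p + t *\<^sub>R d | t. True})"

definition line_through :: "real^2 \<Rightarrow> real^2 \<Rightarrow> (real^2) set" where
  "line_through a b = {a + t *\<^sub>R (b - a) | t. True}"

definition maximal_segment :: "real^2 \<Rightarrow> real^2 \<Rightarrow> (real^2) set \<Rightarrow> bool" where
  "maximal_segment p q C \<longleftrightarrow>
     p \<noteq> q \<and> closed_segment p q \<subseteq> C \<and>
     (\<forall>u v. closed_segment u v \<subseteq> C \<and> closed_segment p q \<subseteq> closed_segment u v
            \<longrightarrow> closed_segment u v = closed_segment p q)"

definition parallel :: "real^2 \<Rightarrow> real^2 \<Rightarrow> bool" where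
  "parallel v w \<longleftrightarrow> (\<exists>c. v = c *\<^sub>R w)"

definition parallel_to_segment_of_S :: "(real^2 \<Rightarrow> real) \<Rightarrow> real^2 \<Rightarrow> real^2 \<Rightarrow> bool" where
  "parallel_to_segment_of_S N x y \<longleftrightarrow>
     (\<exists>a b. a \<noteq> b \<and> closed_segment a b \<subseteq> unit_circle N \<and> parallel (y - x) (b - a))"

end

theory Submission
  imports Defs
begin

text \<open>Along any line the norm is a convex function of the parameter, and a point z lies in the
  bisector of x and y exactly when t \<mapsto> N(z - midpoint x y + t(y - x)) takes equal values at
  -1/2 and 1/2. A convex function of one variable with two distinct equal-valued chords of the
  same length is constant on their hull. A line contained in the bisector is not parallel to y - x,
  since the norm would be periodic along it, so it passes through the midpoint. Two different such
  lines would give a point z of the bisector arbitrarily close to the midpoint together with a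
  second point z + r(y - x), r > 0, and constancy between the two chords yields
  N(y - x) \<le> 2 N(z - midpoint x y), which is absurd. Likewise, if [x y] is a maximal segment of a
  circle, then on the line through its center parallel to y - x only the center lies in the
  bisector: a second equal-valued chord would extend [x y] inside the circle. So every line in the
  bisector passes through the centers of both circles.\<close>

lemma convex_ge_outside_level_chord:
  fixes F :: "real \<Rightarrow> real"
  assumes F: "convex_on UNIV F" and "p < q" "F p = F q" and t: "t \<notin> {p<..<q}"
  shows "F p \<le> F t"
proof (cases "q < t")
  case True
  have "F q \<le> (F t - F p) / (t - p) * (q - p) + F p"
    using convex_on_subset[OF F] True \<open>p < q\<close> by (intro convex_onD_Icc') auto
  then have "0 \<le> (F t - F p) * (q - p)"
    using True \<open>p < q\<close> \<open>F p = F q\<close> by (simp add: field_simps)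
  then show ?thesis
    using \<open>p < q\<close> by (simp add: zero_le_mult_iff)
next
  case False
  show ?thesis
  proof (cases "t < p")
    case True
    have "F p \<le> (F t - F q) / (q - t) * (q - p) + F q"
      using convex_on_subset[OF F] True \<open>p < q\<close> by (intro convex_onD_Icc'') auto
    then have "0 \<le> (F t - F q) * (q - p)"
      using True \<open>p < q\<close> \<open>F p = F q\<close> by (simp add: field_simps)
    then show ?thesis
      using \<open>p < q\<close> \<open>F p = F q\<close> by (simp add: zero_le_mult_iff)
  qed (use False t \<open>F p = F q\<close> in auto)
qed

lemma convex_le_on_level_chord:
  fixes F :: "real \<Rightarrow> real"
  assumes "convex_on UNIV F" "F p = F q" "t \<in> {p..q}"
  shows "F t \<le> F p"
  using convex_on_le_max[OF convex_on_subset[OF assms(1)]] assms(2,3) by fastforce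

lemma convex_const_between_equal_chords:
  fixes F :: "real \<Rightarrow> real"
  assumes F: "convex_on UNIV F" and "a < b" "0 < h"
    and chord_a: "F a = F (a + h)" and chord_b: "F b = F (b + h)"
    and t: "t \<in> {a..b + h}"
  shows "F t = F a"
proof -
  have "F a \<le> F (b + h)"
    using convex_ge_outside_level_chord[OF F _ chord_a] \<open>a < b\<close> \<open>0 < h\<close> by auto
  moreover have "F b \<le> F a"
    using convex_ge_outside_level_chord[OF F _ chord_b] \<open>a < b\<close> \<open>0 < h\<close> by auto
  ultimately have ab: "F a = F b" "F a = F (a + h)" "F a = F (b + h)"
    using chord_a chord_b by auto
  have "F t \<le> F a"
    using convex_le_on_level_chord[OF F ab(3)] t by simp
  moreover have "F a \<le> F t"
  proof (cases "t \<le> a + h")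
    case True
    then show ?thesis
      using convex_ge_outside_level_chord[of F "a + h" "b + h" t] F ab \<open>a < b\<close> by auto
  next
    case False
    then show ?thesis
      using convex_ge_outside_level_chord[OF F _ chord_a, of t] \<open>0 < h\<close> by auto
  qed
  ultimately show ?thesis by simp
qed

definition det2 :: "real^2 \<Rightarrow> real^2 \<Rightarrow> real" where
  "det2 a b = a$1 * b$2 - a$2 * b$1"

lemma det2_swap: "det2 b a = - det2 a b"
  by (simp add: det2_def)

lemma det2_eq_0_imp_parallel:
  assumes "det2 d u = 0" "d \<noteq> 0"
  obtains k where "u = k *\<^sub>R d"
proof (cases "d$1 = 0")
  case True
  then have "d$2 \<noteq> 0"
    using assms(2) by (auto simp: vec_eq_iff forall_2)
  then show ?thesis
    using assms True by (intro that[of "u$2 / d$2"]) (auto simp: vec_eq_iff forall_2 det2_def field_simps)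
next
  case False
  then show ?thesis
    using assms by (intro that[of "u$1 / d$1"]) (auto simp: vec_eq_iff forall_2 det2_def field_simps)
qed

text \<open>Cramer's rule.\<close>
lemma det2_decompose:
  assumes "det2 d u \<noteq> 0"
  shows "v = (det2 v u / det2 d u) *\<^sub>R d + (det2 d v / det2 d u) *\<^sub>R u"
proof -
  let ?D = "det2 d u"
  have "v$i = (det2 v u / ?D) * d$i + (det2 d v / ?D) * u$i" if "i = 1 \<or> i = 2" for i
  proof -
    have "det2 v u * d$i + det2 d v * u$i = v$i * ?D"
      using that by (auto simp: det2_def algebra_simps)
    then show ?thesis
      using assms by (simp add: add_divide_distrib[symmetric])
  qed
  then show ?thesis
    unfolding vec_eq_iff forall_2 by simp
qed

definition line :: "real^2 \<Rightarrow> real^2 \<Rightarrow> (real^2) set" where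
  "line p d = {p + t *\<^sub>R d | t. True}"

lemma is_line_iff: "is_line L \<longleftrightarrow> (\<exists>p d. d \<noteq> 0 \<and> L = line p d)"
  by (simp add: is_line_def line_def)

lemma line_through_eq_line: "line_through a b = line a (b - a)"
  by (simp add: line_through_def line_def)

lemma mem_line: "p + t *\<^sub>R d \<in> line p d"
  by (auto simp: line_def)

lemma mem_lineE:
  assumes "z \<in> line p d"
  obtains t where "z = p + t *\<^sub>R d"
  using assms by (auto simp: line_def)

lemma line_shift:
  assumes "q \<in> line p d"
  shows "line q d = line p d"
proof -
  obtain s where q: "q = p + s *\<^sub>R d"
    using assms by (rule mem_lineE)
  have "q + t *\<^sub>R d = p + (s + t) *\<^sub>R d" "p + t *\<^sub>R d = q + (t - s) *\<^sub>R d" for t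
    by (simp_all add: q algebra_simps)
  then show ?thesis
    unfolding line_def by (metis (no_types, lifting))
qed

lemma line_scaleR:
  assumes "k \<noteq> 0"
  shows "line p (k *\<^sub>R d) = line p d"
proof -
  have "p + t *\<^sub>R d = p + (t / k) *\<^sub>R (k *\<^sub>R d)" for t
    using assms by simp
  moreover have "p + t *\<^sub>R (k *\<^sub>R d) = p + (t * k) *\<^sub>R d" for t
    by simp
  ultimately show ?thesis
    unfolding line_def by (metis (no_types, lifting))
qed

lemma line_meets_transversal:
  assumes "det2 d u \<noteq> 0"
  obtains s where "q + s *\<^sub>R u \<in> line p d"
proof -
  have "p - q = (det2 (p - q) u / det2 d u) *\<^sub>R d + (det2 d (p - q) / det2 d u) *\<^sub>R u"
    using assms by (rule det2_decompose)
  then have "q + (det2 d (p - q) / det2 d u) *\<^sub>R u = p + (- (det2 (p - q) u / det2 d u)) *\<^sub>R d"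
    by (simp add: algebra_simps)
  then show ?thesis
    using that mem_line by metis
qed

lemma closed_segment_along_line:
  assumes "a \<le> b"
  shows "closed_segment (x + a *\<^sub>R u) (x + b *\<^sub>R u) = (\<lambda>s. x + s *\<^sub>R u) ` {a..b}"
proof -
  have "closed_segment (a *\<^sub>R u) (b *\<^sub>R u) = (\<lambda>s. s *\<^sub>R u) ` {a..b}"
    using closed_segment_linear_image[of "\<lambda>s. s *\<^sub>R u" a b] assms
    by (simp add: linear_scaleR_left closed_segment_eq_real_ivl)
  then show ?thesis
    by (simp add: closed_segment_translation image_image)
qed

lemma midpoint_eq_along:
  fixes x y :: "'a::real_vector"
  shows "midpoint x y = x + (1/2) *\<^sub>R (y - x)"
  unfolding midpoint_eq_iff by (simp add: algebra_simps flip: scaleR_add_left)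

lemma diff_midpoint:
  fixes x y z :: "'a::real_vector"
  shows "z - x = (z - midpoint x y) + (1/2) *\<^sub>R (y - x)"
    and "z - y = (z - midpoint x y) + (- 1/2) *\<^sub>R (y - x)"
  by (simp_all add: midpoint_eq_along algebra_simps flip: scaleR_add_left)

lemma mem_bis_iff_midpoint:
  "z \<in> bis N x y \<longleftrightarrow>
     N ((z - midpoint x y) + (1/2) *\<^sub>R (y - x)) = N ((z - midpoint x y) + (- 1/2) *\<^sub>R (y - x))"
  by (simp only: bis_def mem_Collect_eq diff_midpoint[where x = x and y = y and z = z])

locale normed_plane =
  fixes N :: "real^2 \<Rightarrow> real"
  assumes is_norm: "is_norm N"
begin

lemma nonneg: "0 \<le> N v"
  and eq_0_iff: "N v = 0 \<longleftrightarrow> v = 0"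
  and scaleR: "N (c *\<^sub>R v) = \<bar>c\<bar> * N v"
  and triangle: "N (v + w) \<le> N v + N w"
  using is_norm unfolding is_norm_def by auto

lemma pos: "v \<noteq> 0 \<Longrightarrow> 0 < N v"
  using nonneg[of v] eq_0_iff[of v] by simp

lemma minus: "N (- v) = N v"
  using scaleR[of "-1" v] by simp

lemma convex_along_line: "convex_on UNIV (\<lambda>t. N (w + t *\<^sub>R u))"
proof (rule convex_onI)
  fix \<theta> s t :: real
  assume \<theta>: "0 < \<theta>" "\<theta> < 1"
  have "w + ((1 - \<theta>) *\<^sub>R s + \<theta> *\<^sub>R t) *\<^sub>R u
        = (1 - \<theta>) *\<^sub>R (w + s *\<^sub>R u) + \<theta> *\<^sub>R (w + t *\<^sub>R u)"
    by (simp add: algebra_simps)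
  also have "N \<dots> \<le> N ((1 - \<theta>) *\<^sub>R (w + s *\<^sub>R u)) + N (\<theta> *\<^sub>R (w + t *\<^sub>R u))"
    by (rule triangle)
  also have "\<dots> = (1 - \<theta>) * N (w + s *\<^sub>R u) + \<theta> * N (w + t *\<^sub>R u)"
    using \<theta> by (simp add: scaleR)
  finally show "N (w + ((1 - \<theta>) *\<^sub>R s + \<theta> *\<^sub>R t) *\<^sub>R u)
             \<le> (1 - \<theta>) * N (w + s *\<^sub>R u) + \<theta> * N (w + t *\<^sub>R u)" .
qed simp

lemma mem_ncircle_iff:
  assumes "0 < lam"
  shows "z \<in> ncircle N c lam \<longleftrightarrow> N (z - c) = lam"
proof
  assume "z \<in> ncircle N c lam"
  then obtain v where "z = c + lam *\<^sub>R v" "N v = 1"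
    unfolding ncircle_def unit_circle_def by auto
  then show "N (z - c) = lam"
    using assms by (simp add: scaleR)
next
  assume "N (z - c) = lam"
  then have "z = c + lam *\<^sub>R ((1 / lam) *\<^sub>R (z - c))" "N ((1 / lam) *\<^sub>R (z - c)) = 1"
    using assms by (simp_all add: scaleR)
  then show "z \<in> ncircle N c lam"
    unfolding ncircle_def unit_circle_def by blast
qed

lemma mem_bis_iff: "z \<in> bis N x y \<longleftrightarrow> N (z - x) = N (z - y)"
  by (simp add: bis_def)

text \<open>A norm grows linearly along a line, so it cannot be periodic there.\<close>
lemma not_periodic_along_line:
  assumes "u \<noteq> 0"
  shows "\<exists>s. N (a + (s + 1) *\<^sub>R u) \<noteq> N (a + s *\<^sub>R u)"
proof (rule ccontr)
  assume "\<not> ?thesis"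
  then have periodic: "N (a + (s + 1) *\<^sub>R u) = N (a + s *\<^sub>R u)" for s
    by blast
  have iterate: "N (a + real n *\<^sub>R u) = N a" for n
  proof (induction n)
    case (Suc n)
    then show ?case
      using periodic[of "real n"] by (simp add: add.commute)
  qed simp
  obtain n where n: "2 * N a / N u < real n"
    using reals_Archimedean2 by blast
  have "N (real n *\<^sub>R u) \<le> N (a + real n *\<^sub>R u) + N (- a)"
    using triangle[of "a + real n *\<^sub>R u" "- a"] by simp
  then have "real n * N u \<le> 2 * N a"
    by (simp add: iterate scaleR minus)
  with n pos[OF assms] show False
    by (simp add: field_simps)
qed

lemma bis_line_transversal:
  assumes "x \<noteq> y" "d \<noteq> 0" and L: "line p d \<subseteq> bis N x y"
  shows "det2 d (y - x) \<noteq> 0"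
proof
  assume "det2 d (y - x) = 0"
  then obtain k where "y - x = k *\<^sub>R d"
    using \<open>d \<noteq> 0\<close> by (rule det2_eq_0_imp_parallel)
  then have y: "y = x + k *\<^sub>R d"
    by (simp add: algebra_simps)
  have "N (p - x + (s + 1) *\<^sub>R (y - x)) = N (p - x + s *\<^sub>R (y - x))" for s
  proof -
    have "p + (s * k + k) *\<^sub>R d \<in> bis N x y"
      using L mem_line by blast
    moreover have "p + (s * k + k) *\<^sub>R d - x = p - x + (s + 1) *\<^sub>R (y - x)"
      and "p + (s * k + k) *\<^sub>R d - y = p - x + s *\<^sub>R (y - x)"
      by (simp_all add: y algebra_simps)
    ultimately show ?thesis
      by (simp add: mem_bis_iff)
  qed
  then show False
    using not_periodic_along_line[of "y - x" "p - x"] \<open>x \<noteq> y\<close> by auto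
qed

lemma bis_on_line_xy_imp_midpoint:
  assumes "x \<noteq> y" "midpoint x y + s *\<^sub>R (y - x) \<in> bis N x y"
  shows "s = 0"
proof -
  have "N ((s + 1/2) *\<^sub>R (y - x)) = N ((s - 1/2) *\<^sub>R (y - x))"
    using assms(2) unfolding mem_bis_iff_midpoint by (simp add: scaleR_add_left scaleR_diff_left)
  then have "\<bar>s + 1/2\<bar> * N (y - x) = \<bar>s - 1/2\<bar> * N (y - x)"
    by (simp only: scaleR)
  then have "\<bar>s + 1/2\<bar> = \<bar>s - 1/2\<bar>"
    using pos[of "y - x"] assms(1) by simp
  then show ?thesis
    by (simp add: abs_if split: if_splits)
qed

lemma bis_line_through_midpoint:
  assumes "x \<noteq> y" "d \<noteq> 0" and L: "line p d \<subseteq> bis N x y"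
  shows "midpoint x y \<in> line p d"
proof -
  obtain s where s: "midpoint x y + s *\<^sub>R (y - x) \<in> line p d"
    using bis_line_transversal[OF assms] by (rule line_meets_transversal)
  then have "s = 0"
    using L bis_on_line_xy_imp_midpoint[OF \<open>x \<noteq> y\<close>] by blast
  with s show ?thesis
    by simp
qed

lemma bis_pair_bound:
  assumes "z \<in> bis N x y" "z + c *\<^sub>R (y - x) \<in> bis N x y" "0 < c"
  shows "N (y - x) \<le> 2 * N (z - midpoint x y)"
proof -
  define u where "u = y - x"
  define w where "w = z - midpoint x y"
  define F where "F t = N (w + t *\<^sub>R u)" for t
  have chord1: "F (- 1/2) = F (- 1/2 + 1)"
    using assms(1) by (simp add: F_def u_def w_def mem_bis_iff_midpoint)
  have shift: "z + c *\<^sub>R u - midpoint x y + t *\<^sub>R u = w + (c + t) *\<^sub>R u" for t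
    by (simp add: w_def scaleR_add_left)
  have chord2: "F (c - 1/2) = F (c - 1/2 + 1)"
    using assms(2) unfolding mem_bis_iff_midpoint u_def[symmetric] shift
    by (simp add: F_def add.commute)
  have "convex_on UNIV F"
    unfolding F_def by (rule convex_along_line)
  then have const: "F t = F (- 1/2)" if "t \<in> {- 1/2 .. c + 1/2}" for t
    by (rule convex_const_between_equal_chords[OF _ _ _ chord1 chord2]) (use that \<open>0 < c\<close> in auto)
  have "(w + (1/2) *\<^sub>R u) + - (w + (- 1/2) *\<^sub>R u) = (1/2 - (- 1/2)) *\<^sub>R u"
    by (simp only: scaleR_diff_left) (simp add: algebra_simps)
  then have "(w + (1/2) *\<^sub>R u) + - (w + (- 1/2) *\<^sub>R u) = u"
    by simp
  then have "N u \<le> F (1/2) + F (- 1/2)"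
    using triangle[of "w + (1/2) *\<^sub>R u" "- (w + (- 1/2) *\<^sub>R u)"] by (simp only: F_def minus)
  also have "\<dots> = 2 * F 0"
    using const[of "1/2"] const[of 0] \<open>0 < c\<close> by simp
  finally show ?thesis
    by (simp add: F_def u_def w_def)
qed

text \<open>If two lines through the midpoint lay in the bisector, a point z of the first and the
  point z + r(y - x) of the second, r > 0, could be taken arbitrarily close to the midpoint,
  contradicting the bound N(y - x) \<le> 2 N(z - midpoint x y).\<close>
lemma bis_lines_through_midpoint_parallel:
  assumes "x \<noteq> y" "d1 \<noteq> 0" "d2 \<noteq> 0"
    and L1: "line (midpoint x y) d1 \<subseteq> bis N x y" and L2: "line (midpoint x y) d2 \<subseteq> bis N x y"
  shows "det2 d1 d2 = 0"
proof (rule ccontr)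
  assume "det2 d1 d2 \<noteq> 0"
  define m where "m = midpoint x y"
  define u where "u = y - x"
  have "det2 d2 u \<noteq> 0"
    using bis_line_transversal[OF \<open>x \<noteq> y\<close> \<open>d2 \<noteq> 0\<close> L2] by (simp add: u_def)
  define \<alpha> where "\<alpha> = det2 d1 u / det2 d2 u"
  define \<beta> where "\<beta> = det2 d2 d1 / det2 d2 u"
  have d1: "d1 = \<alpha> *\<^sub>R d2 + \<beta> *\<^sub>R u"
    unfolding \<alpha>_def \<beta>_def by (rule det2_decompose) fact
  have "\<beta> \<noteq> 0"
    using \<open>det2 d1 d2 \<noteq> 0\<close> \<open>det2 d2 u \<noteq> 0\<close> by (simp add: \<beta>_def det2_swap[of d2 d1])
  have Nu: "0 < N u" and Nd1: "0 < N d1"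
    using assms(1,2) by (simp_all add: u_def pos)
  define r where "r = N u * \<bar>\<beta>\<bar> / (4 * N d1)"
  define t where "t = - r / \<beta>"
  have "0 < r"
    using Nu Nd1 \<open>\<beta> \<noteq> 0\<close> by (simp add: r_def)
  have "m + t *\<^sub>R d1 + r *\<^sub>R u = m + (t * \<alpha>) *\<^sub>R d2"
    using \<open>\<beta> \<noteq> 0\<close> by (simp add: d1 t_def scaleR_add_right)
  then have "m + t *\<^sub>R d1 + r *\<^sub>R u \<in> bis N x y"
    using L2 mem_line[of m "t * \<alpha>" d2] unfolding m_def by (metis subsetD)
  moreover have "m + t *\<^sub>R d1 \<in> bis N x y"
    using L1 mem_line unfolding m_def by auto
  ultimately have "N u \<le> 2 * N (t *\<^sub>R d1)"
    using bis_pair_bound \<open>0 < r\<close> unfolding m_def u_def by fastforce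
  also have "\<dots> = 2 * (r / \<bar>\<beta>\<bar>) * N d1"
    using \<open>0 < r\<close> by (simp add: t_def minus scaleR abs_divide)
  also have "\<dots> = N u / 2"
    using Nd1 \<open>\<beta> \<noteq> 0\<close> by (simp add: r_def)
  finally show False
    using Nu by simp
qed

theorem bis_contains_at_most_one_line:
  assumes "x \<noteq> y"
    and "is_line L1" "L1 \<subseteq> bis N x y" and "is_line L2" "L2 \<subseteq> bis N x y"
  shows "L1 = L2"
proof -
  obtain p1 d1 p2 d2 where "d1 \<noteq> 0" "L1 = line p1 d1" "d2 \<noteq> 0" "L2 = line p2 d2"
    using assms(2,4) is_line_iff by metis
  with assms have L1: "L1 = line (midpoint x y) d1" and L2: "L2 = line (midpoint x y) d2"
    using bis_line_through_midpoint line_shift by metis+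
  then have "det2 d1 d2 = 0"
    using bis_lines_through_midpoint_parallel \<open>d1 \<noteq> 0\<close> \<open>d2 \<noteq> 0\<close> assms by simp
  then obtain k where "d2 = k *\<^sub>R d1"
    using \<open>d1 \<noteq> 0\<close> by (rule det2_eq_0_imp_parallel)
  then show ?thesis
    using L1 L2 \<open>d2 \<noteq> 0\<close> line_scaleR by force
qed

lemma maximal_segment_endpoints_on_circle:
  assumes "0 < lam" "maximal_segment x y (ncircle N c lam)"
  shows "N (x - c) = lam" "N (y - c) = lam"
  using assms mem_ncircle_iff unfolding maximal_segment_def by auto

text \<open>Otherwise convexity along the line would put the segment from x + t(y - x) to y on the
  circle, extending the maximal segment.\<close>
lemma maximal_segment_beyond_start:
  assumes "0 < lam" and max: "maximal_segment x y (ncircle N c lam)" and "t < 0"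
  shows "lam < N (x + t *\<^sub>R (y - x) - c)"
proof (rule ccontr)
  define u where "u = y - x"
  define F where "F s = N ((x - c) + s *\<^sub>R u)" for s
  assume "\<not> ?thesis"
  then have Ft: "F t \<le> lam"
    by (simp add: F_def u_def algebra_simps)
  have convex: "convex_on UNIV F"
    unfolding F_def by (rule convex_along_line)
  have F0: "F 0 = lam" and F1: "F 1 = lam"
    using maximal_segment_endpoints_on_circle[OF assms(1,2)] by (simp_all add: F_def u_def)
  then have "F t = lam"
    using Ft convex_ge_outside_level_chord[OF convex, of 0 1 t] \<open>t < 0\<close> by simp
  have on_circle: "F s = lam" if "s \<in> {t..1}" for s
  proof -
    have "F s \<le> lam"
      using convex_le_on_level_chord[OF convex, of t 1 s] that \<open>F t = lam\<close> F1 by simp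
    moreover have "lam \<le> F s"
    proof (cases "s \<le> 0")
      case True
      then show ?thesis
        using convex_ge_outside_level_chord[OF convex, of 0 1 s] F0 F1 by simp
    next
      case False
      then show ?thesis
        using convex_ge_outside_level_chord[OF convex, of t 0 s] \<open>F t = lam\<close> F0 \<open>t < 0\<close> by simp
    qed
    ultimately show ?thesis
      by simp
  qed
  have seg: "closed_segment (x + t *\<^sub>R u) y = (\<lambda>r. x + r *\<^sub>R u) ` {t..1}"
    using closed_segment_along_line[of t 1 x u] \<open>t < 0\<close> by (simp add: u_def)
  have "closed_segment (x + t *\<^sub>R u) y \<subseteq> ncircle N c lam"
    using on_circle \<open>0 < lam\<close> unfolding seg by (auto simp: u_def mem_ncircle_iff F_def algebra_simps)
  moreover have "x \<in> closed_segment (x + t *\<^sub>R u) y"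
    using \<open>t < 0\<close> unfolding seg by (auto simp: image_iff intro: bexI[of _ 0])
  then have "closed_segment x y \<subseteq> closed_segment (x + t *\<^sub>R u) y"
    by (simp add: closed_segment_subset)
  ultimately have "closed_segment (x + t *\<^sub>R u) y = closed_segment x y"
    using max unfolding maximal_segment_def by blast
  then have "x + t *\<^sub>R u \<in> closed_segment x y"
    by (metis ends_in_segment(1))
  moreover have "closed_segment x y = (\<lambda>r. x + r *\<^sub>R u) ` {0..1}"
    using closed_segment_along_line[of 0 1 x u] by (simp add: u_def)
  ultimately obtain r where "r \<in> {0..1}" "t *\<^sub>R u = r *\<^sub>R u"
    by auto
  moreover have "u \<noteq> 0"
    using max by (auto simp: u_def maximal_segment_def)
  ultimately show False
    using \<open>t < 0\<close> by simp
qed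

lemma maximal_segment_outside:
  assumes "0 < lam" "maximal_segment x y (ncircle N c lam)" "t \<notin> {0..1}"
  shows "lam < N (x + t *\<^sub>R (y - x) - c)"
proof (cases "t < 0")
  case True
  then show ?thesis
    using maximal_segment_beyond_start[OF assms(1,2)] by blast
next
  case False
  have "maximal_segment y x (ncircle N c lam)"
    using assms(2) unfolding maximal_segment_def closed_segment_commute[of y x] by metis
  moreover have "x + t *\<^sub>R (y - x) = y + (1 - t) *\<^sub>R (x - y)"
    by (simp add: algebra_simps)
  ultimately show ?thesis
    using maximal_segment_beyond_start[OF assms(1), of y x c "1 - t"] False assms(3) by simp
qed

text \<open>Along the line through the center parallel to y - x, the bisector condition says that the
  chord [x, y] has an equal-norm translate; convexity makes the norm constant between the two,
  pushing part of the circle outside [x, y].\<close>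
lemma maximal_segment_center_unique:
  assumes "0 < lam" and max: "maximal_segment x y (ncircle N c lam)"
    and "c + s *\<^sub>R (y - x) \<in> bis N x y"
  shows "s = 0"
proof (rule ccontr)
  assume "s \<noteq> 0"
  define F where "F t = N ((x - c) + t *\<^sub>R (y - x))" for t
  have convex: "convex_on UNIV F"
    unfolding F_def by (rule convex_along_line)
  have F: "F t = N (x + t *\<^sub>R (y - x) - c)" for t
    by (simp add: F_def algebra_simps)
  have chord: "F 0 = F (0 + 1)"
    using maximal_segment_endpoints_on_circle[OF assms(1,2)] by (simp add: F_def)
  have "c + s *\<^sub>R (y - x) - x = - ((x - c) + (- s) *\<^sub>R (y - x))"
    and "c + s *\<^sub>R (y - x) - y = - ((x - c) + (- s + 1) *\<^sub>R (y - x))"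
    by (simp_all add: algebra_simps)
  then have shifted_chord: "F (- s) = F (- s + 1)"
    using assms(3) unfolding F_def mem_bis_iff by (simp only: minus)
  show False
  proof (cases "0 < s")
    case True
    then have "F 0 = F (- s)"
      by (intro convex_const_between_equal_chords[OF convex _ _ shifted_chord chord]) auto
    then show ?thesis
      using maximal_segment_outside[OF assms(1,2), of "- s"] chord True
        maximal_segment_endpoints_on_circle[OF assms(1,2)] by (simp add: F F_def)
  next
    case False
    then have "F (- s + 1) = F 0"
      using \<open>s \<noteq> 0\<close>
      by (intro convex_const_between_equal_chords[OF convex _ _ chord shifted_chord]) auto
    then show ?thesis
      using maximal_segment_outside[OF assms(1,2), of "- s + 1"] False \<open>s \<noteq> 0\<close>
        maximal_segment_endpoints_on_circle[OF assms(1,2)] by (simp add: F F_def)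
  qed
qed

lemma center_mem_bis_line:
  assumes "d \<noteq> 0" and L: "line p d \<subseteq> bis N x y"
    and "0 < lam" and max: "maximal_segment x y (ncircle N c lam)"
  shows "c \<in> line p d"
proof -
  have "x \<noteq> y"
    using max by (simp add: maximal_segment_def)
  obtain s where s: "c + s *\<^sub>R (y - x) \<in> line p d"
    using bis_line_transversal[OF \<open>x \<noteq> y\<close> \<open>d \<noteq> 0\<close> L] by (rule line_meets_transversal)
  then have "s = 0"
    using L maximal_segment_center_unique[OF \<open>0 < lam\<close> max] by blast
  with s show ?thesis
    by simp
qed

theorem bis_line_eq_line_through_centers:
  assumes "is_line L" "L \<subseteq> bis N x y" "0 < lam1" "0 < lam2"
    and max1: "maximal_segment x y (ncircle N c1 lam1)"
    and max2: "maximal_segment x y (ncircle N c2 lam2)"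
    and "ncircle N c1 lam1 \<noteq> ncircle N c2 lam2"
  shows "L = line_through c1 c2"
proof -
  obtain p d where "d \<noteq> 0" and L: "L = line p d"
    using assms(1) is_line_iff by metis
  have c1: "c1 \<in> L" and c2: "c2 \<in> L"
    using center_mem_bis_line \<open>d \<noteq> 0\<close> assms(2-6) unfolding L by blast+
  have "c1 \<noteq> c2"
    using maximal_segment_endpoints_on_circle(1)[OF \<open>0 < lam1\<close> max1]
      maximal_segment_endpoints_on_circle(1)[OF \<open>0 < lam2\<close> max2] assms(7) by auto
  obtain k where "c2 = c1 + k *\<^sub>R d"
    using c2 line_shift[OF c1[unfolded L]] L by (auto elim: mem_lineE)
  with \<open>c1 \<noteq> c2\<close> have "line_through c1 c2 = line c1 d"
    by (simp add: line_through_eq_line line_scaleR)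
  then show ?thesis
    using line_shift[OF c1[unfolded L]] L by simp
qed

end

text \<open>The hypothesis that [x y] is parallel to a segment of the unit circle only guarantees that
  two circles containing [x y] as a maximal segment exist.\<close>
theorem corollary2p1:
  fixes N :: "real^2 \<Rightarrow> real" and x y :: "real^2"
  assumes "is_norm N" and "x \<noteq> y"
  shows "(\<forall>L1 L2. is_line L1 \<and> L1 \<subseteq> bis N x y \<and> is_line L2 \<and> L2 \<subseteq> bis N x y
            \<longrightarrow> L1 = L2)
       \<and> (parallel_to_segment_of_S N x y \<longrightarrow>
           (\<forall>L c1 c2 lam1 lam2.
              is_line L \<and> L \<subseteq> bis N x y \<and>
              lam1 > 0 \<and> lam2 > 0 \<and>
              maximal_segment x y (ncircle N c1 lam1) \<and>
              maximal_segment x y (ncircle N c2 lam2) \<and>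
              ncircle N c1 lam1 \<noteq> ncircle N c2 lam2
              \<longrightarrow> L = line_through c1 c2))"
proof -
  interpret normed_plane N
    by unfold_locales (rule assms(1))
  show ?thesis
  proof (intro conjI allI impI)
    show "L1 = L2" if "is_line L1 \<and> L1 \<subseteq> bis N x y \<and> is_line L2 \<and> L2 \<subseteq> bis N x y" for L1 L2
      using bis_contains_at_most_one_line[OF assms(2)] that by blast
    show "L = line_through c1 c2"
      if "is_line L \<and> L \<subseteq> bis N x y \<and> lam1 > 0 \<and> lam2 > 0 \<and>
          maximal_segment x y (ncircle N c1 lam1) \<and> maximal_segment x y (ncircle N c2 lam2) \<and>
          ncircle N c1 lam1 \<noteq> ncircle N c2 lam2" for L c1 c2 lam1 lam2
      using bis_line_eq_line_through_centers that by blast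
  qed
qed

end
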